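(* Let $\mathfrak{n}$ be a real nilpotent Lie algebra and $J$ a $3$-step complex structure on $\mathfrak{n}$. Then no inner product on $\mathfrak{n}$ that is Hermitian with respect to $J$ is pluriclosed.
   Context: A complex structure on a real Lie algebra $\mathfrak{g}$ is a linear map $J:\mathfrak{g}\to\mathfrak{g}$ with $J^2=-I$ and $N_J(x,y):=[x,y]+J([Jx,y]+[x,Jy])-[Jx,Jy]=0$ for all $x,y\in\mathfrak{g}$. Given such $J$, define inductively $\mathfrak{a}_0(J)=0$ and $\mathfrak{a}_\ell(J)=\{x\in\mathfrak{g}: [x,\mathfrak{g}]\subset\mathfrak{a}_{\ell-1}(J)\text{ and }[Jx,\mathfrak{g}]\subset\mathfrak{a}_{\ell-1}(J)\}$ for $\ell\ge1$; $J$ is $t$-step if $t$ is the smallest integer with $\mathfrak{a}_t(J)=\mathfrak{g}$. An inner product $\langle\cdot,\cdot\rangle$ is Hermitian if $\langle Jx,Jy\rangle=\langle x,y\rangle$. Its torsion 3-form is $c(x,y,z)=-\langle[Jx,Jy],z\rangle-\langle[Jy,Jz],x\rangle-\langle[Jz,Jx],y\rangle$, and $\langle\cdot,\cdot\rangle$ is pluriclosed if $dc=0$, where $d$ is the Chevalley–Eilenberg differential on $\Lambda^*\mathfrak{g}^*$ (equivalently the corresponding left-invariant 3-form on the Lie group is closed). *)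

theory Defs
  imports "HOL-Analysis.Analysis"
begin

text \<open>A real finite-dimensional Lie algebra is modelled on a Euclidean space type 'a
(used only as a finite-dimensional real vector space; its built-in inner product is
never used) together with a bracket br.\<close>

definition lie_algebra :: "('a::real_vector \<Rightarrow> 'a \<Rightarrow> 'a) \<Rightarrow> bool" where
  "lie_algebra br \<longleftrightarrow> bilinear br \<and> (\<forall>x. br x x = 0) \<and>
     (\<forall>x y z. br x (br y z) + br y (br z x) + br z (br x y) = 0)"

fun lcs :: "('a::real_vector \<Rightarrow> 'a \<Rightarrow> 'a) \<Rightarrow> nat \<Rightarrow> 'a set" where
  "lcs br 0 = UNIV"
| "lcs br (Suc k) = span {br x y | x y. y \<in> lcs br k}"

definition nilpotent_lie :: "('a::real_vector \<Rightarrow> 'a \<Rightarrow> 'a) \<Rightarrow> bool" where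
  "nilpotent_lie br \<longleftrightarrow> (\<exists>k. lcs br k = {0})"

definition nijenhuis :: "('a::real_vector \<Rightarrow> 'a \<Rightarrow> 'a) \<Rightarrow> ('a \<Rightarrow> 'a) \<Rightarrow> 'a \<Rightarrow> 'a \<Rightarrow> 'a" where
  "nijenhuis br J x y = br x y + J (br (J x) y + br x (J y)) - br (J x) (J y)"

definition complex_structure :: "('a::real_vector \<Rightarrow> 'a \<Rightarrow> 'a) \<Rightarrow> ('a \<Rightarrow> 'a) \<Rightarrow> bool" where
  "complex_structure br J \<longleftrightarrow> linear J \<and> (\<forall>x. J (J x) = - x) \<and>
     (\<forall>x y. nijenhuis br J x y = 0)"

fun asc :: "('a::real_vector \<Rightarrow> 'a \<Rightarrow> 'a) \<Rightarrow> ('a \<Rightarrow> 'a) \<Rightarrow> nat \<Rightarrow> 'a set" where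
  "asc br J 0 = {0}"
| "asc br J (Suc l) = {x. (\<forall>y. br x y \<in> asc br J l) \<and> (\<forall>y. br (J x) y \<in> asc br J l)}"

definition is_t_step :: "('a::real_vector \<Rightarrow> 'a \<Rightarrow> 'a) \<Rightarrow> ('a \<Rightarrow> 'a) \<Rightarrow> nat \<Rightarrow> bool" where
  "is_t_step br J t \<longleftrightarrow> asc br J t = UNIV \<and> (\<forall>s<t. asc br J s \<noteq> UNIV)"

definition inner_product :: "('a::real_vector \<Rightarrow> 'a \<Rightarrow> real) \<Rightarrow> bool" where
  "inner_product g \<longleftrightarrow> bilinear g \<and> (\<forall>x y. g x y = g y x) \<and> (\<forall>x. x \<noteq> 0 \<longrightarrow> g x x > 0)"

definition hermitian :: "('a::real_vector \<Rightarrow> 'a) \<Rightarrow> ('a \<Rightarrow> 'a \<Rightarrow> real) \<Rightarrow> bool" where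
  "hermitian J g \<longleftrightarrow> inner_product g \<and> (\<forall>x y. g (J x) (J y) = g x y)"

definition torsion :: "('a::real_vector \<Rightarrow> 'a \<Rightarrow> 'a) \<Rightarrow> ('a \<Rightarrow> 'a) \<Rightarrow> ('a \<Rightarrow> 'a \<Rightarrow> real)
    \<Rightarrow> 'a \<Rightarrow> 'a \<Rightarrow> 'a \<Rightarrow> real" where
  "torsion br J g x y z = - g (br (J x) (J y)) z - g (br (J y) (J z)) x - g (br (J z) (J x)) y"

text \<open>Chevalley--Eilenberg differential of a 3-form (trivial coefficients):
 dc(x0,..,x3) = sum_{i<j} (-1)^(i+j) c([xi,xj], x0,..,^xi,..,^xj,..,x3).\<close>
definition ce_d3 :: "('a::real_vector \<Rightarrow> 'a \<Rightarrow> 'a) \<Rightarrow> ('a \<Rightarrow> 'a \<Rightarrow> 'a \<Rightarrow> real)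
    \<Rightarrow> 'a \<Rightarrow> 'a \<Rightarrow> 'a \<Rightarrow> 'a \<Rightarrow> real" where
  "ce_d3 br c x0 x1 x2 x3 =
     - c (br x0 x1) x2 x3 + c (br x0 x2) x1 x3 - c (br x0 x3) x1 x2
     - c (br x1 x2) x0 x3 + c (br x1 x3) x0 x2 - c (br x2 x3) x0 x1"

definition pluriclosed :: "('a::real_vector \<Rightarrow> 'a \<Rightarrow> 'a) \<Rightarrow> ('a \<Rightarrow> 'a) \<Rightarrow> ('a \<Rightarrow> 'a \<Rightarrow> real) \<Rightarrow> bool" where
  "pluriclosed br J g \<longleftrightarrow> (\<forall>x0 x1 x2 x3. ce_d3 br (torsion br J g) x0 x1 x2 x3 = 0)"

end

theory Submission
  imports Defs
begin

text \<open>Let a lie in a_2(J) with [a, Ja] = 0. For every b, all brackets entering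
  dc(a, Ja, b, Jb) lie in a_1(J), and the value is -S - g(k, a), where S \<ge> 0 is the sum of the
  squared norms of [a, b], [a, Jb], [Ja, b], [Ja, Jb] and k is a vector of a_1(J). Replacing a by
  a + k changes none of these brackets, so if dc = 0 the two values give g(k, k) = 0, hence k = 0,
  S = 0, and a lies in a_1(J). For a 3-step J some bracket m = [u, y] lies in a_2(J) but not in
  a_1(J), while the Jacobi identity gives [m, Jm] = 0: a contradiction.\<close>

locale complex_lie_algebra =
  fixes br :: "'a::real_vector \<Rightarrow> 'a \<Rightarrow> 'a" and J :: "'a \<Rightarrow> 'a"
  assumes lie: "lie_algebra br"
    and cs: "complex_structure br J"
begin

lemma br_bilinear: "bilinear br"
  using lie by (simp add: lie_algebra_def)

lemma J_linear: "linear J"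
  using cs by (simp add: complex_structure_def)

lemma J_J [simp]: "J (J x) = - x"
  using cs by (simp add: complex_structure_def)

lemma br_add_left [simp]: "br (x + y) z = br x z + br y z"
  and br_add_right [simp]: "br z (x + y) = br z x + br z y"
  and br_minus_left [simp]: "br (- x) z = - br x z"
  and br_minus_right [simp]: "br z (- x) = - br z x"
  and br_zero_left [simp]: "br 0 z = 0"
  and br_zero_right [simp]: "br z 0 = 0"
  using br_bilinear
  by (simp_all add: bilinear_ladd bilinear_radd bilinear_lneg bilinear_rneg
      bilinear_lzero bilinear_rzero)

lemma J_add [simp]: "J (x + y) = J x + J y"
  and J_minus [simp]: "J (- x) = - J x"
  and J_zero [simp]: "J 0 = 0"
  using J_linear by (simp_all add: linear_add linear_neg linear_0)

lemma br_self [simp]: "br x x = 0"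
  using lie by (simp add: lie_algebra_def)

lemma jacobi: "br x (br y z) + br y (br z x) + br z (br x y) = 0"
  using lie by (simp add: lie_algebra_def)

lemma br_anticomm: "br y x = - br x y"
proof -
  have "0 = br (x + y) (x + y)"
    by (simp only: br_self)
  also have "\<dots> = br x y + br y x"
    by (simp only: br_add_left br_add_right) simp
  finally show ?thesis
    by (metis add.commute eq_neg_iff_add_eq_0)
qed

lemma mem_asc_1_iff: "u \<in> asc br J 1 \<longleftrightarrow> (\<forall>y. br u y = 0) \<and> (\<forall>y. br (J u) y = 0)"
  by simp

lemma mem_asc_2_iff:
  "a \<in> asc br J 2 \<longleftrightarrow> (\<forall>y. br a y \<in> asc br J 1) \<and> (\<forall>y. br (J a) y \<in> asc br J 1)"
  by (simp add: numeral_2_eq_2)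

lemma mem_asc_3_iff:
  "x \<in> asc br J 3 \<longleftrightarrow> (\<forall>y. br x y \<in> asc br J 2) \<and> (\<forall>y. br (J x) y \<in> asc br J 2)"
  by (simp add: numeral_3_eq_3 numeral_2_eq_2)

lemma br_asc_1_right:
  assumes "u \<in> asc br J 1"
  shows "br y u = 0" and "br y (J u) = 0"
  using assms br_anticomm[of y u] br_anticomm[of y "J u"] by (auto simp: mem_asc_1_iff)

lemma asc_1_add: "u \<in> asc br J 1 \<Longrightarrow> v \<in> asc br J 1 \<Longrightarrow> u + v \<in> asc br J 1"
  and asc_1_J: "u \<in> asc br J 1 \<Longrightarrow> J u \<in> asc br J 1"
  and asc_1_minus: "u \<in> asc br J 1 \<Longrightarrow> - u \<in> asc br J 1"
  by (simp_all add: mem_asc_1_iff)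

lemma br_add_asc_1:
  assumes "k \<in> asc br J 1"
  shows "br (a + k) y = br a y" and "br (J (a + k)) y = br (J a) y"
    and "br y (a + k) = br y a" and "br y (J (a + k)) = br y (J a)"
  using assms br_asc_1_right[OF assms] by (simp_all add: mem_asc_1_iff)

lemma asc_2_add_asc_1: "a \<in> asc br J 2 \<Longrightarrow> k \<in> asc br J 1 \<Longrightarrow> a + k \<in> asc br J 2"
  by (simp add: mem_asc_2_iff br_add_asc_1)

lemma asc_2_J: "a \<in> asc br J 2 \<Longrightarrow> J a \<in> asc br J 2"
  by (simp add: mem_asc_2_iff asc_1_minus)

lemma br_J_eq_0_if_bracket_asc_2:
  assumes "br u y \<in> asc br J 2"
  shows "br (br u y) (J (br u y)) = 0"
proof -
  let ?m = "br u y"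
  have "J ?m \<in> asc br J 2"
    using asc_2_J[OF assms] .
  then have c1: "br (J ?m) y \<in> asc br J 1" and c2: "br (J ?m) u \<in> asc br J 1"
    by (simp_all add: mem_asc_2_iff)
  have "br u (br y (J ?m)) = - br u (br (J ?m) y)"
    by (simp only: br_anticomm[of "J ?m" y] br_minus_right minus_minus)
  then have "br u (br y (J ?m)) = 0"
    using br_asc_1_right(1)[OF c1] by simp
  moreover have "br y (br (J ?m) u) = 0"
    using br_asc_1_right(1)[OF c2] .
  ultimately have "br (J ?m) ?m = 0"
    using jacobi[of "J ?m" u y] by simp
  then show ?thesis
    using br_anticomm[of "J ?m" ?m] by simp
qed

end

locale hermitian_lie_algebra = complex_lie_algebra +
  fixes g :: "'a::real_vector \<Rightarrow> 'a \<Rightarrow> real"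
  assumes herm: "hermitian J g"
begin

lemma g_bilinear: "bilinear g"
  using herm by (simp add: hermitian_def inner_product_def)

lemma g_add_left [simp]: "g (x + y) z = g x z + g y z"
  and g_add_right [simp]: "g z (x + y) = g z x + g z y"
  and g_minus_left [simp]: "g (- x) z = - g x z"
  and g_minus_right [simp]: "g z (- x) = - g z x"
  and g_zero_left [simp]: "g 0 z = 0"
  and g_zero_right [simp]: "g z 0 = 0"
  using g_bilinear
  by (simp_all add: bilinear_ladd bilinear_radd bilinear_lneg bilinear_rneg
      bilinear_lzero bilinear_rzero)

lemma g_J_J [simp]: "g (J x) (J y) = g x y"
  using herm by (simp add: hermitian_def)

lemma g_J_right: "g x (J y) = - g (J x) y"
  using g_J_J[of x "J y"] by simp

lemma g_self_nonneg: "0 \<le> g x x"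
  and g_self_eq_0_iff: "g x x = 0 \<longleftrightarrow> x = 0"
  using herm unfolding hermitian_def inner_product_def
  by (metis g_zero_left less_eq_real_def, metis g_zero_left less_irrefl)

lemma torsion_asc_1:
  assumes "u \<in> asc br J 1"
  shows "torsion br J g u y w = - g (br (J y) (J w)) u"
  using assms br_asc_1_right[OF assms] by (simp add: torsion_def mem_asc_1_iff)

definition bracket_sq :: "'a \<Rightarrow> 'a \<Rightarrow> real" where
  "bracket_sq a b = g (br a b) (br a b) + g (br a (J b)) (br a (J b))
     + g (br (J a) b) (br (J a) b) + g (br (J a) (J b)) (br (J a) (J b))"

definition dc_cross :: "'a \<Rightarrow> 'a \<Rightarrow> 'a" where
  "dc_cross a b = J (br (J (br b (J b))) (J a)) + br a (J (br b (J b)))"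

lemma ce_d3_torsion_asc_2:
  assumes a: "a \<in> asc br J 2" and aJa: "br a (J a) = 0"
  shows "ce_d3 br (torsion br J g) a (J a) b (J b) = - bracket_sq a b - g (dc_cross a b) a"
proof -
  define w where "w = br b (J b)"
  have central: "br a y \<in> asc br J 1" "br (J a) y \<in> asc br J 1" for y
    using a by (simp_all add: mem_asc_2_iff)
  have JaMa: "br (J a) a = 0"
    using aJa br_anticomm[of "J a" a] by simp
  have "torsion br J g w a (J a) = - g (br (J w) (J a)) (J a) + g (br a (J w)) a"
    by (simp add: torsion_def JaMa)
  also have "\<dots> = g (dc_cross a b) a"
    by (simp add: dc_cross_def w_def g_J_right)
  finally have "torsion br J g w a (J a) = g (dc_cross a b) a" .
  then show ?thesis
    unfolding ce_d3_def bracket_sq_def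
    using aJa torsion_asc_1[of 0] torsion_asc_1[OF central(1)] torsion_asc_1[OF central(2)]
    by (simp add: w_def g_J_right mem_asc_1_iff)
qed

lemma dc_cross_asc_1: "a \<in> asc br J 2 \<Longrightarrow> dc_cross a b \<in> asc br J 1"
  unfolding dc_cross_def
  by (metis asc_1_J asc_1_add asc_1_minus br_anticomm mem_asc_2_iff)

lemma bracket_sq_add_asc_1: "k \<in> asc br J 1 \<Longrightarrow> bracket_sq (a + k) b = bracket_sq a b"
  and dc_cross_add_asc_1: "k \<in> asc br J 1 \<Longrightarrow> dc_cross (a + k) b = dc_cross a b"
  by (simp_all only: bracket_sq_def dc_cross_def br_add_asc_1)

lemma asc_2_imp_asc_1_if_pluriclosed:
  assumes pc: "pluriclosed br J g" and a: "a \<in> asc br J 2" and aJa: "br a (J a) = 0"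
  shows "a \<in> asc br J 1"
proof -
  have "br a b = 0 \<and> br (J a) b = 0" for b
  proof -
    define k where "k = dc_cross a b"
    have k: "k \<in> asc br J 1"
      using dc_cross_asc_1[OF a] by (simp add: k_def)
    have dc_a: "- bracket_sq a b - g k a = 0"
      using pc ce_d3_torsion_asc_2[OF a aJa] by (simp add: pluriclosed_def k_def)
    have "br (a + k) (J (a + k)) = 0"
      using aJa by (simp only: br_add_asc_1[OF k])
    then have dc_ak: "- bracket_sq a b - g k (a + k) = 0"
      using pc ce_d3_torsion_asc_2[OF asc_2_add_asc_1[OF a k]] k by (simp add: pluriclosed_def k_def bracket_sq_add_asc_1 dc_cross_add_asc_1)
    have "g k k = 0"
      using dc_a dc_ak by simp
    then have "bracket_sq a b = 0"
      using dc_a by (simp add: g_self_eq_0_iff)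
    then have "g (br a b) (br a b) = 0 \<and> g (br (J a) b) (br (J a) b) = 0"
      unfolding bracket_sq_def using g_self_nonneg by (smt (verit))
    then show ?thesis
      by (simp add: g_self_eq_0_iff)
  qed
  then show ?thesis
    by (simp add: mem_asc_1_iff)
qed

end

theorem mainTheorem14:
  fixes br :: "'a::euclidean_space \<Rightarrow> 'a \<Rightarrow> 'a" and J :: "'a \<Rightarrow> 'a"
  assumes "lie_algebra br"
    and "nilpotent_lie br"
    and "complex_structure br J"
    and "is_t_step br J 3"
  shows "\<not> (\<exists>g. hermitian J g \<and> pluriclosed br J g)"
proof
  assume "\<exists>g. hermitian J g \<and> pluriclosed br J g"
  then obtain g where "hermitian J g" and pc: "pluriclosed br J g"
    by blast
  interpret hermitian_lie_algebra br J g
    using assms(1,3) \<open>hermitian J g\<close> by unfold_locales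
  have asc_3: "asc br J 3 = UNIV" and "asc br J 2 \<noteq> UNIV"
    using assms(4) by (auto simp: is_t_step_def)
  then obtain z where "z \<notin> asc br J 2"
    by blast
  then obtain u y where m: "br u y \<notin> asc br J 1"
    by (auto simp: mem_asc_2_iff)
  have "br u y \<in> asc br J 2"
    using asc_3 mem_asc_3_iff[of u] by blast
  with m show False
    using asc_2_imp_asc_1_if_pluriclosed[OF pc] br_J_eq_0_if_bracket_asc_2 by blast
qed

end
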